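(* Let $n\ge4$ and $\mathcal{A}\in\mathcal{S}_n$. Then $\operatorname{Ann}\mathcal{A}=\langle e_n\rangle$, and the automorphisms of $\mathcal{A}$ are exactly the linear maps $e_1\mapsto e_1+xe_n$, $e_i\mapsto e_i$ ($2\le i\le n$), with $x\in\mathbb{C}$.
   Context: Over $\mathbb{C}$, basis $e_1,\dots,e_n$, $e_ie_j=\sum_kc_{ij}^ke_k$. Condition ( * ): $c_{ij}^k=0$ whenever $k\le\max\{i,j\}$. For $n\ge4$, $\mathcal{S}_n$ is the family of commutative structures satisfying ( * ) with $e_i^2=e_{i+1}$ ($1\le i\le n-1$), $c_{23}^4=1$, $c_{12}^4\ne0$, $c_{1i}^{i+1}=0$ ($2\le i\le n-1$), other constants arbitrary subject to ( * ) and commutativity. $\operatorname{Ann}\mathcal{A}=\{a:a\mathcal{A}+\mathcal{A}a=0\}$. *)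

theory Defs
  imports Main "HOL.Complex"
begin

text \<open>The algebra with basis e_1..e_n over the complex numbers is modelled as the
space of coordinate vectors v :: nat => complex supported on {1..n}; the
structure constants are c i j k, meaning e_i e_j = sum_k c i j k e_k.\<close>

definition vspace :: "nat \<Rightarrow> (nat \<Rightarrow> complex) set" where
  "vspace n = {v. \<forall>k. k \<notin> {1..n} \<longrightarrow> v k = 0}"

definition basis_vec :: "nat \<Rightarrow> nat \<Rightarrow> complex" where
  "basis_vec i = (\<lambda>k. if k = i then 1 else 0)"

definition vadd :: "(nat \<Rightarrow> complex) \<Rightarrow> (nat \<Rightarrow> complex) \<Rightarrow> nat \<Rightarrow> complex" where
  "vadd a b = (\<lambda>k. a k + b k)"

definition vscale :: "complex \<Rightarrow> (nat \<Rightarrow> complex) \<Rightarrow> nat \<Rightarrow> complex" where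
  "vscale t a = (\<lambda>k. t * a k)"

definition zero_vec :: "nat \<Rightarrow> complex" where
  "zero_vec = (\<lambda>k. 0)"

definition alg_mult :: "nat \<Rightarrow> (nat \<Rightarrow> nat \<Rightarrow> nat \<Rightarrow> complex) \<Rightarrow>
    (nat \<Rightarrow> complex) \<Rightarrow> (nat \<Rightarrow> complex) \<Rightarrow> nat \<Rightarrow> complex" where
  "alg_mult n c a b = (\<lambda>k. if k \<in> {1..n}
      then (\<Sum>i\<in>{1..n}. \<Sum>j\<in>{1..n}. a i * b j * c i j k) else 0)"

definition in_S :: "nat \<Rightarrow> (nat \<Rightarrow> nat \<Rightarrow> nat \<Rightarrow> complex) \<Rightarrow> bool" where
  "in_S n c \<longleftrightarrow>
     (\<forall>i\<in>{1..n}. \<forall>j\<in>{1..n}. \<forall>k\<in>{1..n}. c i j k = c j i k) \<and>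
     (\<forall>i\<in>{1..n}. \<forall>j\<in>{1..n}. \<forall>k\<in>{1..n}. k \<le> max i j \<longrightarrow> c i j k = 0) \<and>
     (\<forall>i\<in>{1..n-1}. \<forall>k\<in>{1..n}. c i i k = (if k = i + 1 then 1 else 0)) \<and>
     c 2 3 4 = 1 \<and> c 1 2 4 \<noteq> 0 \<and>
     (\<forall>i\<in>{2..n-1}. c 1 i (i + 1) = 0)"

definition annihilator :: "nat \<Rightarrow> (nat \<Rightarrow> nat \<Rightarrow> nat \<Rightarrow> complex) \<Rightarrow> (nat \<Rightarrow> complex) set" where
  "annihilator n c = {a \<in> vspace n. \<forall>b \<in> vspace n.
      alg_mult n c a b = zero_vec \<and> alg_mult n c b a = zero_vec}"

text \<open>Algebra automorphisms: bijective linear maps of the space preserving the product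
(only the values on the space matter).\<close>
definition is_automorphism :: "nat \<Rightarrow> (nat \<Rightarrow> nat \<Rightarrow> nat \<Rightarrow> complex) \<Rightarrow>
    ((nat \<Rightarrow> complex) \<Rightarrow> (nat \<Rightarrow> complex)) \<Rightarrow> bool" where
  "is_automorphism n c f \<longleftrightarrow>
     bij_betw f (vspace n) (vspace n) \<and>
     (\<forall>a\<in>vspace n. \<forall>b\<in>vspace n. f (vadd a b) = vadd (f a) (f b)) \<and>
     (\<forall>t. \<forall>a\<in>vspace n. f (vscale t a) = vscale t (f a)) \<and>
     (\<forall>a\<in>vspace n. \<forall>b\<in>vspace n. f (alg_mult n c a b) = alg_mult n c (f a) (f b))"

end

theory Submission
  imports Defs
begin

text \<open>The condition \<open>c i j k = 0\<close> for \<open>k \<le> max i j\<close> makes the algebra strictly upper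
  triangular: a product has no component
  below one more than the lowest nonzero index of either factor. This forces the annihilator to be
  spanned by \<open>e\<^sub>n\<close>, and forces every automorphism \<open>f\<close> to be triangular, because each
  \<open>e\<^sub>i\<close> is an iterated square of \<open>e\<^sub>1\<close>. Let \<open>d\<close> be the \<open>e\<^sub>1\<close>-coefficient of
  \<open>f e\<^sub>1\<close>. The conditions \<open>c 1 i (i + 1) = 0\<close> kill the middle coefficients of \<open>f e\<^sub>1\<close>,
  so \<open>f e\<^sub>1 = d e\<^sub>1 + x e\<^sub>n\<close> and \<open>f e\<^sub>i = d ^ 2 ^ (i - 1) e\<^sub>i\<close> for \<open>i \<ge> 2\<close>.
  Comparing \<open>e\<^sub>4\<close>-coefficients in \<open>f (e\<^sub>2 e\<^sub>3)\<close> and \<open>f (e\<^sub>1 e\<^sub>2)\<close>, using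
  \<open>c 2 3 4 = 1\<close> and \<open>c 1 2 4 \<noteq> 0\<close>, gives \<open>d ^ 6 = d ^ 8 = d ^ 3\<close>, hence \<open>d = 1\<close>.
  Conversely such a shear fixes every product, since products have no \<open>e\<^sub>1\<close>-component and
  \<open>e\<^sub>n\<close> annihilates.\<close>

definition strictly_upper :: "nat \<Rightarrow> (nat \<Rightarrow> nat \<Rightarrow> nat \<Rightarrow> complex) \<Rightarrow> bool" where
  "strictly_upper n c \<longleftrightarrow>
     (\<forall>i\<in>{1..n}. \<forall>j\<in>{1..n}. \<forall>k\<in>{1..n}. k \<le> max i j \<longrightarrow> c i j k = 0)"

lemma strictly_upperD:
  "strictly_upper n c \<Longrightarrow> i \<in> {1..n} \<Longrightarrow> j \<in> {1..n} \<Longrightarrow> k \<in> {1..n} \<Longrightarrow> k \<le> max i j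
    \<Longrightarrow> c i j k = 0"
  unfolding strictly_upper_def by blast

lemma in_S_strictly_upper: "in_S n c \<Longrightarrow> strictly_upper n c"
  unfolding in_S_def strictly_upper_def by blast

lemma in_S_square_coeff:
  assumes "in_S n c" "1 \<le> i" "i < n" "k \<in> {1..n}"
  shows "c i i k = (if k = i + 1 then 1 else 0)"
proof -
  have "i \<in> {1..n - 1}" using assms(2,3) by auto
  then show ?thesis using assms(1,4) unfolding in_S_def by blast
qed

lemma in_S_coeff_2_3_4: "in_S n c \<Longrightarrow> c 2 3 4 = 1"
  unfolding in_S_def by blast

lemma in_S_coeff_1_2_4: "in_S n c \<Longrightarrow> c 1 2 4 \<noteq> 0"
  unfolding in_S_def by blast

lemma in_S_coeff_1_Suc:
  assumes "in_S n c" "2 \<le> i" "i < n"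
  shows "c 1 i (i + 1) = 0"
proof -
  have "i \<in> {2..n - 1}" using assms(2,3) by auto
  then show ?thesis using assms(1) unfolding in_S_def by blast
qed

lemma basis_vec_apply: "basis_vec i k = (if k = i then 1 else 0)"
  by (simp add: basis_vec_def)

lemma basis_vec_in_vspace: "i \<in> {1..n} \<Longrightarrow> basis_vec i \<in> vspace n"
  unfolding vspace_def basis_vec_def by auto

lemma vadd_in_vspace: "a \<in> vspace n \<Longrightarrow> b \<in> vspace n \<Longrightarrow> vadd a b \<in> vspace n"
  unfolding vspace_def vadd_def by auto

lemma vscale_in_vspace: "a \<in> vspace n \<Longrightarrow> vscale t a \<in> vspace n"
  unfolding vspace_def vscale_def by auto

lemma alg_mult_in_vspace: "alg_mult n c a b \<in> vspace n"
  unfolding vspace_def alg_mult_def by auto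

lemma vspace_eq_0: "v \<in> vspace n \<Longrightarrow> k \<notin> {1..n} \<Longrightarrow> v k = 0"
  unfolding vspace_def by blast

lemma alg_mult_vscale:
  "alg_mult n c (vscale s a) (vscale t b) = vscale (s * t) (alg_mult n c a b)"
  unfolding alg_mult_def vscale_def
  by (auto simp: sum_distrib_left mult_ac intro!: sum.cong)

lemma alg_mult_eq_single_term:
  assumes "i \<in> {1..n}" "j \<in> {1..n}" "k \<in> {1..n}"
    and "\<And>p q. p \<in> {1..n} \<Longrightarrow> q \<in> {1..n} \<Longrightarrow> (p, q) \<noteq> (i, j) \<Longrightarrow> a p * b q * c p q k = 0"
  shows "alg_mult n c a b k = a i * b j * c i j k"
proof -
  have row: "(\<Sum>q\<in>{1..n}. a p * b q * c p q k) = (if p = i then a i * b j * c i j k else 0)"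
    if "p \<in> {1..n}" for p
  proof (cases "p = i")
    case True
    have "(\<Sum>q\<in>{1..n}. a p * b q * c p q k) = (\<Sum>q\<in>{1..n}. if q = j then a i * b j * c i j k else 0)"
      using True that assms(4) by (intro sum.cong) auto
    then show ?thesis using True assms(2) by simp
  next
    case False
    then show ?thesis using that assms(4) by (auto intro: sum.neutral)
  qed
  have "alg_mult n c a b k = (\<Sum>p\<in>{1..n}. if p = i then a i * b j * c i j k else 0)"
    unfolding alg_mult_def using assms(3) row by (auto intro!: sum.cong)
  then show ?thesis using assms(1) by simp
qed

lemma alg_mult_basis_vec:
  assumes "i \<in> {1..n}" "j \<in> {1..n}" "k \<in> {1..n}"
  shows "alg_mult n c (basis_vec i) (basis_vec j) k = c i j k"
  using alg_mult_eq_single_term[OF assms] by (auto simp: basis_vec_def)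

lemma alg_mult_eq_0_below:
  assumes "strictly_upper n c" and "(\<forall>p<k. a p = 0) \<or> (\<forall>q<k. b q = 0)"
  shows "alg_mult n c a b k = 0"
proof (cases "k \<in> {1..n}")
  case True
  have "a p * b q * c p q k = 0" if "p \<in> {1..n}" "q \<in> {1..n}" for p q
  proof (cases "k \<le> max p q")
    case True
    then show ?thesis using strictly_upperD[OF assms(1) that \<open>k \<in> {1..n}\<close>] by simp
  qed (use assms(2) in auto)
  then show ?thesis unfolding alg_mult_def using True by (auto intro!: sum.neutral)
qed (auto simp: alg_mult_def)

lemma alg_mult_cong_off_top:
  assumes "strictly_upper n c"
    and "\<And>p. p \<noteq> n \<Longrightarrow> a' p = a p" and "\<And>q. q \<noteq> n \<Longrightarrow> b' q = b q"
  shows "alg_mult n c a' b' = alg_mult n c a b"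
proof
  fix k
  have "a' p * b' q * c p q k = a p * b q * c p q k" if "p \<in> {1..n}" "q \<in> {1..n}" "k \<in> {1..n}" for p q
  proof (cases "p = n \<or> q = n")
    case True
    then have "k \<le> max p q" using that(3) by auto
    then show ?thesis using strictly_upperD[OF assms(1) that] by simp
  qed (use assms(2,3) in auto)
  then show "alg_mult n c a' b' k = alg_mult n c a b k"
    unfolding alg_mult_def by (auto intro!: sum.cong)
qed

text \<open>The term \<open>a 1 * b m\<close> survives the hypothesis on \<open>a\<close> but is killed by
  \<open>c 1 m (m + 1) = 0\<close>.\<close>
lemma alg_mult_Suc_coeff:
  assumes S: "in_S n c" and m: "1 \<le> m" "m < n"
    and b: "\<forall>q<m. b q = 0" and a: "\<forall>p. 2 \<le> p \<longrightarrow> p < m \<longrightarrow> a p = 0"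
  shows "alg_mult n c a b (m + 1) = a m * b m"
proof -
  have range: "m \<in> {1..n}" "m + 1 \<in> {1..n}" using m by auto
  have "alg_mult n c a b (m + 1) = a m * b m * c m m (m + 1)"
  proof (rule alg_mult_eq_single_term[OF range(1,1,2)])
    fix p q assume p: "p \<in> {1..n}" and q: "q \<in> {1..n}" and pq: "(p, q) \<noteq> (m, m)"
    consider "q < m" | "m + 1 \<le> max p q" | "q = m" "p = 1" "2 \<le> m" | "2 \<le> p" "p < m"
      using p pq by fastforce
    then show "a p * b q * c p q (m + 1) = 0"
    proof cases
      case 2
      then show ?thesis using strictly_upperD[OF in_S_strictly_upper[OF S] p q range(2)] by simp
    next
      case 3
      then show ?thesis using in_S_coeff_1_Suc[OF S _ m(2)] by simp
    qed (use a b in auto)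
  qed
  then show ?thesis using in_S_square_coeff[OF S m range(2)] by simp
qed

lemma alg_mult_self_supported:
  assumes S: "in_S n c" and i: "1 \<le> i" "i < n"
    and a: "\<forall>p\<in>{1..n}. p \<noteq> i \<and> p \<noteq> n \<longrightarrow> a p = 0"
  shows "alg_mult n c a a = vscale (a i * a i) (basis_vec (i + 1))"
proof
  fix k
  show "alg_mult n c a a k = vscale (a i * a i) (basis_vec (i + 1)) k"
  proof (cases "k \<in> {1..n}")
    case k: True
    have range: "i \<in> {1..n}" using i by auto
    have "alg_mult n c a a k = a i * a i * c i i k"
    proof (rule alg_mult_eq_single_term[OF range range k])
      fix p q assume p: "p \<in> {1..n}" and q: "q \<in> {1..n}" and pq: "(p, q) \<noteq> (i, i)"
      show "a p * a q * c p q k = 0"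
      proof (cases "p = n \<or> q = n")
        case True
        then have "k \<le> max p q" using k by auto
        then show ?thesis using strictly_upperD[OF in_S_strictly_upper[OF S] p q k] by simp
      qed (use a p q pq in auto)
    qed
    then show ?thesis using in_S_square_coeff[OF S i k] by (simp add: vscale_def basis_vec_def)
  next
    case False
    then show ?thesis using i by (auto simp: alg_mult_def vscale_def basis_vec_def)
  qed
qed

lemma basis_vec_square:
  assumes "in_S n c" "1 \<le> i" "i < n"
  shows "alg_mult n c (basis_vec i) (basis_vec i) = basis_vec (i + 1)"
  using alg_mult_self_supported[OF assms, of "basis_vec i"]
  by (simp add: basis_vec_def vscale_def)

lemma annihilator_subset_top_line:
  assumes S: "in_S n c"
  shows "annihilator n c \<subseteq> {vscale t (basis_vec n) | t. True}"
proof
  fix a assume "a \<in> annihilator n c"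
  then have a: "a \<in> vspace n" and ann: "\<And>b. b \<in> vspace n \<Longrightarrow> alg_mult n c a b = zero_vec"
    unfolding annihilator_def by auto
  have low: "a m = 0" if "1 \<le> m" "m < n" for m
    using that
  proof (induction m rule: less_induct)
    case (less m)
    have m: "m \<in> {1..n}" using less.prems by auto
    have "a m = a m * basis_vec m m" by (simp add: basis_vec_def)
    also have "\<dots> = alg_mult n c a (basis_vec m) (m + 1)"
      using less by (intro alg_mult_Suc_coeff[OF S, symmetric]) (auto simp: basis_vec_def)
    also have "\<dots> = 0" using ann[OF basis_vec_in_vspace[OF m]] by (simp add: zero_vec_def)
    finally show ?case .
  qed
  have "a = vscale (a n) (basis_vec n)"
  proof
    fix k show "a k = vscale (a n) (basis_vec n) k"
      using low vspace_eq_0[OF a, of k] by (cases "k \<in> {1..n}") (auto simp: vscale_def basis_vec_def)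
  qed
  then show "a \<in> {vscale t (basis_vec n) | t. True}" by blast
qed

lemma top_line_subset_annihilator:
  assumes S: "strictly_upper n c" and n: "1 \<le> n"
  shows "{vscale t (basis_vec n) | t. True} \<subseteq> annihilator n c"
proof clarify
  fix t
  let ?a = "vscale t (basis_vec n)"
  have a: "?a \<in> vspace n" using n by (intro vscale_in_vspace basis_vec_in_vspace) simp
  have "alg_mult n c ?a b k = 0 \<and> alg_mult n c b ?a k = 0" for b k
  proof (cases "k \<le> n")
    case True
    then have "\<forall>p<k. ?a p = 0" by (simp add: vscale_def basis_vec_def)
    then show ?thesis using alg_mult_eq_0_below[OF S] by blast
  qed (simp add: alg_mult_def)
  then show "?a \<in> annihilator n c"
    using a unfolding annihilator_def zero_vec_def by (simp add: fun_eq_iff)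
qed

lemma annihilator_eq_top_line:
  assumes "in_S n c" "1 \<le> n"
  shows "annihilator n c = {vscale t (basis_vec n) | t. True}"
  using annihilator_subset_top_line top_line_subset_annihilator in_S_strictly_upper assms
  by (metis subset_antisym)

lemma linear_map_zero:
  assumes "\<forall>t. \<forall>a\<in>vspace n. f (vscale t a) = vscale t (f a)"
  shows "f zero_vec = zero_vec"
proof -
  have "zero_vec \<in> vspace n" by (simp add: vspace_def zero_vec_def)
  then have "f (vscale 0 zero_vec) = vscale 0 (f zero_vec)" using assms by blast
  then show ?thesis by (simp add: vscale_def zero_vec_def)
qed

lemma linear_map_basis_expansion:
  assumes add: "\<forall>a\<in>vspace n. \<forall>b\<in>vspace n. f (vadd a b) = vadd (f a) (f b)"
    and scale: "\<forall>t. \<forall>a\<in>vspace n. f (vscale t a) = vscale t (f a)"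
    and v: "v \<in> vspace n"
  shows "f v k = (\<Sum>i\<in>{1..n}. v i * f (basis_vec i) k)"
proof -
  have partial: "f (\<lambda>k. if k \<in> I then v k else 0) = (\<lambda>k. \<Sum>i\<in>I. v i * f (basis_vec i) k)"
    if "I \<subseteq> {1..n}" for I
    using that
  proof (induction I rule: infinite_finite_induct)
    case (infinite I) then show ?case using finite_subset by blast
  next
    case empty then show ?case using linear_map_zero[OF scale] by (simp add: zero_vec_def)
  next
    case (insert x I)
    let ?vI = "\<lambda>k. if k \<in> I then v k else 0"
    have x: "x \<in> {1..n}" and I: "I \<subseteq> {1..n}" using insert.prems by auto
    have split: "(\<lambda>k. if k \<in> insert x I then v k else 0) = vadd ?vI (vscale (v x) (basis_vec x))"
      using insert.hyps(2) by (auto simp: vadd_def vscale_def basis_vec_def)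
    have vI: "?vI \<in> vspace n" using v by (auto simp: vspace_def)
    have ex: "vscale (v x) (basis_vec x) \<in> vspace n"
      using x by (intro vscale_in_vspace basis_vec_in_vspace)
    have "f (vadd ?vI (vscale (v x) (basis_vec x)))
        = vadd (f ?vI) (f (vscale (v x) (basis_vec x)))"
      using add vI ex by blast
    also have "\<dots> = vadd (f ?vI) (vscale (v x) (f (basis_vec x)))"
      using scale basis_vec_in_vspace[OF x] by metis
    also have "\<dots> = (\<lambda>k. \<Sum>i\<in>insert x I. v i * f (basis_vec i) k)"
      unfolding insert.IH[OF I] using insert.hyps by (simp add: vadd_def vscale_def add.commute)
    finally show ?case unfolding split .
  qed
  have "(\<lambda>k. if k \<in> {1..n} then v k else 0) = v" using v by (auto simp: vspace_def)
  then show ?thesis using partial[of "{1..n}"] by simp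
qed

definition shear :: "nat \<Rightarrow> complex \<Rightarrow> (nat \<Rightarrow> complex) \<Rightarrow> nat \<Rightarrow> complex" where
  "shear n x v = vadd v (vscale (v 1 * x) (basis_vec n))"

lemma shear_apply: "shear n x v k = v k + (if k = n then v 1 * x else 0)"
  by (simp add: shear_def vadd_def vscale_def basis_vec_def)

lemma shear_is_automorphism:
  assumes S: "strictly_upper n c" and n: "2 \<le> n"
    and f_shear: "\<forall>v\<in>vspace n. f v = shear n x v"
  shows "is_automorphism n c f"
proof -
  have f: "f v = shear n x v" if "v \<in> vspace n" for v
    using f_shear that by blast
  have shear_in: "shear n y v \<in> vspace n" if "v \<in> vspace n" for y v
    using that n by (auto simp: vspace_def shear_apply)
  have inverse: "shear n (- x) (shear n x v) = v" "shear n x (shear n (- x) v) = v" for v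
    using n by (simp_all add: fun_eq_iff shear_apply)
  have "bij_betw (shear n x) (vspace n) (vspace n)"
    by (rule bij_betw_byWitness[where f' = "shear n (- x)"]) (use inverse shear_in in auto)
  then have "bij_betw f (vspace n) (vspace n)"
    using f by (simp cong: bij_betw_cong)
  moreover have "f (vadd a b) = vadd (f a) (f b)" if "a \<in> vspace n" "b \<in> vspace n" for a b
    using that vadd_in_vspace[OF that] by (simp add: f fun_eq_iff shear_apply vadd_def distrib_right)
  moreover have "f (vscale t a) = vscale t (f a)" if "a \<in> vspace n" for t a
    using that vscale_in_vspace[OF that] by (simp add: f fun_eq_iff shear_apply vscale_def algebra_simps)
  moreover have "f (alg_mult n c a b) = alg_mult n c (f a) (f b)" if "a \<in> vspace n" "b \<in> vspace n" for a b
  proof -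
    have "alg_mult n c a b 1 = 0" using alg_mult_eq_0_below[OF S] vspace_eq_0[OF that(1)] by simp
    then have "f (alg_mult n c a b) = alg_mult n c a b"
      by (simp add: f alg_mult_in_vspace fun_eq_iff shear_apply)
    also have "\<dots> = alg_mult n c (f a) (f b)"
      using that by (intro alg_mult_cong_off_top[OF S, symmetric]) (simp_all add: f shear_apply)
    finally show ?thesis .
  qed
  ultimately show ?thesis unfolding is_automorphism_def by blast
qed

lemma eq_1_if_power_relations:
  fixes d :: "'a :: idom"
  assumes "d \<noteq> 0" "d ^ 6 = d ^ 8" "d ^ 3 = d ^ 8"
  shows "d = 1"
proof -
  have "d ^ 6 * (d ^ 2 - 1) = d ^ 8 - d ^ 6" by algebra
  then have "d ^ 6 * (d ^ 2 - 1) = 0" using assms(2) by simp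
  then have d2: "d ^ 2 = 1" using assms(1) by simp
  have "d ^ 3 * (d ^ 5 - 1) = d ^ 8 - d ^ 3" by algebra
  then have "d ^ 3 * (d ^ 5 - 1) = 0" using assms(3) by simp
  then have "d ^ 5 = 1" using assms(1) by simp
  moreover have "d ^ 5 = d * (d ^ 2) ^ 2" by algebra
  ultimately show ?thesis using d2 by simp
qed

locale S_automorphism =
  fixes n :: nat and c :: "nat \<Rightarrow> nat \<Rightarrow> nat \<Rightarrow> complex"
    and f :: "(nat \<Rightarrow> complex) \<Rightarrow> nat \<Rightarrow> complex"
  assumes n_ge_4: "4 \<le> n" and in_S: "in_S n c" and automorphism: "is_automorphism n c f"
begin

lemma c_strictly_upper: "strictly_upper n c"
  using in_S by (rule in_S_strictly_upper)

lemma f_vadd: "\<forall>a\<in>vspace n. \<forall>b\<in>vspace n. f (vadd a b) = vadd (f a) (f b)"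
  and f_vscale: "\<forall>t. \<forall>a\<in>vspace n. f (vscale t a) = vscale t (f a)"
  and f_alg_mult: "a \<in> vspace n \<Longrightarrow> b \<in> vspace n \<Longrightarrow> f (alg_mult n c a b) = alg_mult n c (f a) (f b)"
  and f_bij: "bij_betw f (vspace n) (vspace n)"
  using automorphism unfolding is_automorphism_def by auto

lemma f_expansion: "v \<in> vspace n \<Longrightarrow> f v k = (\<Sum>i\<in>{1..n}. v i * f (basis_vec i) k)"
  by (rule linear_map_basis_expansion[OF f_vadd f_vscale])

lemma f_basis_vec_in_vspace: "i \<in> {1..n} \<Longrightarrow> f (basis_vec i) \<in> vspace n"
  using f_bij basis_vec_in_vspace bij_betwE by blast

lemma f_basis_vec_eq_0_outside: "i \<in> {1..n} \<Longrightarrow> k \<notin> {1..n} \<Longrightarrow> f (basis_vec i) k = 0"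
  by (rule vspace_eq_0[OF f_basis_vec_in_vspace])

lemma f_basis_vec_Suc:
  assumes "1 \<le> i" "i < n"
  shows "f (basis_vec (i + 1)) = alg_mult n c (f (basis_vec i)) (f (basis_vec i))"
proof -
  have "basis_vec i \<in> vspace n" using assms by (intro basis_vec_in_vspace) simp
  then show ?thesis using f_alg_mult basis_vec_square[OF in_S assms] by metis
qed

lemma f_basis_vec_vanishes_below:
  assumes e1: "\<forall>p<1 + s. f (basis_vec 1) p = 0" and i: "1 \<le> i" "i \<le> n" and j: "j < i + s"
  shows "f (basis_vec i) j = 0"
  using i j
proof (induction i arbitrary: j rule: nat_induct_at_least)
  case base
  then show ?case using e1 by simp
next
  case (Suc i)
  then have "alg_mult n c (f (basis_vec i)) (f (basis_vec i)) j = 0"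
    by (intro alg_mult_eq_0_below[OF c_strictly_upper]) auto
  then show ?case using f_basis_vec_Suc Suc.hyps Suc.prems by simp
qed

lemma f_basis_vec_triangular:
  assumes "i \<in> {1..n}" "j < i"
  shows "f (basis_vec i) j = 0"
proof -
  have "f (basis_vec 1) 0 = 0"
    using n_ge_4 by (intro f_basis_vec_eq_0_outside) auto
  then show ?thesis using f_basis_vec_vanishes_below[of 0 i j] assms by auto
qed

lemma f_vanishes_below:
  assumes w: "w \<in> vspace n" and "\<forall>p<k. w p = 0" and "j < k"
  shows "f w j = 0"
proof -
  have "w i * f (basis_vec i) j = 0" if "i \<in> {1..n}" for i
    using assms f_basis_vec_triangular[OF that] by (cases "i < k") auto
  then show ?thesis using f_expansion[OF w] by (simp add: sum.neutral)
qed

definition d :: complex where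
  "d = f (basis_vec 1) 1"

lemma f_basis_vec_diag:
  assumes "1 \<le> i" "i \<le> n"
  shows "f (basis_vec i) i = d ^ 2 ^ (i - 1)"
  using assms
proof (induction i rule: nat_induct_at_least)
  case base
  then show ?case by (simp add: d_def)
next
  case (Suc i)
  have "\<forall>q<i. f (basis_vec i) q = 0" using Suc f_basis_vec_triangular by simp
  then have "alg_mult n c (f (basis_vec i)) (f (basis_vec i)) (i + 1) = f (basis_vec i) i * f (basis_vec i) i"
    using Suc by (intro alg_mult_Suc_coeff[OF in_S]) auto
  then have "f (basis_vec (i + 1)) (i + 1) = f (basis_vec i) i * f (basis_vec i) i"
    using f_basis_vec_Suc Suc by simp
  moreover have "(2::nat) ^ i = 2 ^ (i - 1) + 2 ^ (i - 1)" using Suc.hyps by (cases i) auto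
  ultimately show ?case using Suc by (simp flip: power_add)
qed

lemma d_nonzero: "d \<noteq> 0"
proof
  assume "d = 0"
  then have e1: "\<forall>p<1 + 1. f (basis_vec 1) p = 0"
    using f_basis_vec_eq_0_outside[of 1 0] n_ge_4 by (auto simp: d_def less_Suc_eq)
  have "f (basis_vec n) k = zero_vec k" for k
    using f_basis_vec_vanishes_below[OF e1, of n k] f_basis_vec_eq_0_outside[of n k] n_ge_4
    by (cases "k \<le> n") (auto simp: zero_vec_def)
  then have "f (basis_vec n) = f zero_vec"
    using linear_map_zero[OF f_vscale] by auto
  moreover have "zero_vec \<in> vspace n" by (simp add: zero_vec_def vspace_def)
  moreover have "basis_vec n \<in> vspace n" using n_ge_4 by (intro basis_vec_in_vspace) simp
  ultimately have "basis_vec n = zero_vec"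
    using f_bij by (metis bij_betw_def inj_onD)
  then show False by (metis basis_vec_def zero_vec_def zero_neq_one)
qed

lemma f_basis_vec_diag_nonzero: "1 \<le> i \<Longrightarrow> i \<le> n \<Longrightarrow> f (basis_vec i) i \<noteq> 0"
  using f_basis_vec_diag d_nonzero by simp

text \<open>The \<open>(m + 1)\<close>-th coefficient of \<open>f (e\<^sub>1 e\<^sub>m) = f e\<^sub>1 \<cdot> f e\<^sub>m\<close> is
  \<open>f e\<^sub>1 m * d ^ 2 ^ (m - 1)\<close>, and it vanishes because \<open>e\<^sub>1 e\<^sub>m\<close> has no component
  below index \<open>m + 2\<close>.\<close>
lemma f_basis_vec_1_middle:
  assumes "2 \<le> m" "m < n"
  shows "f (basis_vec 1) m = 0"
  using assms
proof (induction m rule: less_induct)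
  case (less m)
  have m: "m \<in> {1..n}" "1 \<in> {1..n}" using less.prems by auto
  define w where "w = alg_mult n c (basis_vec 1) (basis_vec m)"
  have "w p = 0" if "p < m + 2" for p
  proof (cases "p \<in> {1..n}")
    case p: True
    then have "w p = c 1 m p" unfolding w_def using m by (simp add: alg_mult_basis_vec)
    also have "\<dots> = 0"
    proof (cases "p = m + 1")
      case True
      then show ?thesis using in_S_coeff_1_Suc[OF in_S less.prems] by simp
    next
      case False
      then show ?thesis using strictly_upperD[OF c_strictly_upper m(2) m(1) p] that by simp
    qed
    finally show ?thesis .
  qed (auto simp: w_def alg_mult_def)
  then have "f w (m + 1) = 0"
    using f_vanishes_below[of w "m + 2" "m + 1"] alg_mult_in_vspace unfolding w_def by auto
  moreover have "f w = alg_mult n c (f (basis_vec 1)) (f (basis_vec m))"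
    unfolding w_def using m by (intro f_alg_mult basis_vec_in_vspace)
  moreover have "alg_mult n c (f (basis_vec 1)) (f (basis_vec m)) (m + 1)
      = f (basis_vec 1) m * f (basis_vec m) m"
    using less f_basis_vec_triangular[OF m(1)] by (intro alg_mult_Suc_coeff[OF in_S]) auto
  ultimately show ?case using f_basis_vec_diag_nonzero[of m] less.prems by simp
qed

lemma f_basis_vec_off_diag:
  assumes "2 \<le> i" "i \<le> n" "k \<noteq> i"
  shows "f (basis_vec i) k = 0"
proof -
  have square_off_diag: "f (basis_vec (j + 1)) k = 0"
    if j: "1 \<le> j" "j < n" and supp: "\<forall>p\<in>{1..n}. p \<noteq> j \<and> p \<noteq> n \<longrightarrow> f (basis_vec j) p = 0"
      and "k \<noteq> j + 1" for j k
    using alg_mult_self_supported[OF in_S j supp] f_basis_vec_Suc[OF j] that(4)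
    by (simp add: vscale_def basis_vec_def)
  show ?thesis
    using assms
  proof (induction i arbitrary: k rule: nat_induct_at_least)
    case base
    then show ?case using square_off_diag[of 1] f_basis_vec_1_middle n_ge_4 by (simp add: numeral_2_eq_2)
  next
    case (Suc i)
    then show ?case using square_off_diag[of i] by simp
  qed
qed

lemma f_basis_vec_eq:
  assumes "2 \<le> i" "i \<le> n"
  shows "f (basis_vec i) = vscale (d ^ 2 ^ (i - 1)) (basis_vec i)"
  using assms f_basis_vec_diag f_basis_vec_off_diag
  by (auto simp: fun_eq_iff vscale_def basis_vec_def)

lemma f_coeff_4:
  assumes w: "w \<in> vspace n" and "w 1 = 0"
  shows "f w 4 = d ^ 8 * w 4"
proof -
  have "w i * f (basis_vec i) 4 = (if i = 4 then d ^ 8 * w 4 else 0)" if "i \<in> {1..n}" for i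
    using that assms(2) f_basis_vec_eq[of i] by (cases "i = 1") (auto simp: vscale_def basis_vec_def)
  then have "f w 4 = (\<Sum>i\<in>{1..n}. if i = 4 then d ^ 8 * w 4 else 0)"
    using f_expansion[OF w] by simp
  then show ?thesis using n_ge_4 by simp
qed

lemma d_power_6_eq_power_8: "d ^ 6 = d ^ 8"
proof -
  have range: "1 \<in> {1..n}" "2 \<in> {1..n}" "3 \<in> {1..n}" "4 \<in> {1..n}" using n_ge_4 by auto
  have f_e2: "f (basis_vec 2) = vscale (d ^ 2) (basis_vec 2)"
    using f_basis_vec_eq[of 2] n_ge_4 by simp
  have f_e3: "f (basis_vec 3) = vscale (d ^ 4) (basis_vec 3)"
    using f_basis_vec_eq[of 3] n_ge_4 by simp
  define w where "w = alg_mult n c (basis_vec 2) (basis_vec 3)"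
  have w1: "w 1 = 0" and w4: "w 4 = 1"
    unfolding w_def using range alg_mult_basis_vec in_S_coeff_2_3_4[OF in_S]
      strictly_upperD[OF c_strictly_upper range(2,3,1)] by simp_all
  have wv: "w \<in> vspace n" unfolding w_def by (rule alg_mult_in_vspace)
  have "f w = vscale (d ^ 2 * d ^ 4) w"
    unfolding w_def using range f_e2 f_e3
    by (simp add: f_alg_mult basis_vec_in_vspace alg_mult_vscale)
  then have "f w 4 = d ^ 6" using w4 by (simp add: vscale_def flip: power_add)
  then show ?thesis using f_coeff_4[OF wv w1] w4 by simp
qed

lemma d_power_3_eq_power_8: "d ^ 3 = d ^ 8"
proof -
  have range: "1 \<in> {1..n}" "2 \<in> {1..n}" "4 \<in> {1..n}" using n_ge_4 by auto
  define w where "w = alg_mult n c (basis_vec 1) (basis_vec 2)"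
  have w1: "w 1 = 0" and w4: "w 4 = c 1 2 4"
    unfolding w_def using range alg_mult_basis_vec strictly_upperD[OF c_strictly_upper range(1,2,1)]
    by simp_all
  have wv: "w \<in> vspace n" unfolding w_def by (rule alg_mult_in_vspace)
  have "f w = alg_mult n c (f (basis_vec 1)) (vscale (d ^ 2) (basis_vec 2))"
    unfolding w_def using range f_basis_vec_eq[of 2] n_ge_4
    by (simp add: f_alg_mult basis_vec_in_vspace)
  moreover have "alg_mult n c (f (basis_vec 1)) (vscale (d ^ 2) (basis_vec 2)) 4
      = f (basis_vec 1) 1 * vscale (d ^ 2) (basis_vec 2) 2 * c 1 2 4"
  proof (rule alg_mult_eq_single_term[OF range])
    fix p q assume p: "p \<in> {1..n}" and q: "q \<in> {1..n}" and pq: "(p, q) \<noteq> (1, 2)"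
    show "f (basis_vec 1) p * vscale (d ^ 2) (basis_vec 2) q * c p q 4 = 0"
    proof (cases "p = n")
      case True
      then show ?thesis using strictly_upperD[OF c_strictly_upper p q range(3)] n_ge_4 by simp
    qed (use p pq f_basis_vec_1_middle in \<open>auto simp: vscale_def basis_vec_apply\<close>)
  qed
  ultimately have "f w 4 = d ^ 3 * c 1 2 4"
    by (simp add: d_def vscale_def basis_vec_apply power3_eq_cube power2_eq_square)
  then show ?thesis using f_coeff_4[OF wv w1] w4 in_S_coeff_1_2_4[OF in_S] by simp
qed

lemma d_eq_1: "d = 1"
  using eq_1_if_power_relations d_nonzero d_power_6_eq_power_8 d_power_3_eq_power_8 by blast

lemma f_basis_vec_1_eq_shear: "f (basis_vec 1) = shear n (f (basis_vec 1) n) (basis_vec 1)"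
proof
  fix k
  show "f (basis_vec 1) k = shear n (f (basis_vec 1) n) (basis_vec 1) k"
  proof (cases "k = 1 \<or> k = n")
    case True
    then show ?thesis using d_eq_1 n_ge_4 by (auto simp: d_def shear_apply basis_vec_apply)
  next
    case False
    moreover have "f (basis_vec 1) k = 0"
    proof (cases "k \<in> {1..n}")
      case True
      with False show ?thesis using f_basis_vec_1_middle by auto
    next
      case False
      then show ?thesis using n_ge_4 by (intro f_basis_vec_eq_0_outside) auto
    qed
    ultimately show ?thesis by (simp add: shear_apply basis_vec_apply)
  qed
qed

lemma f_basis_vec_eq_shear:
  assumes "i \<in> {1..n}"
  shows "f (basis_vec i) = shear n (f (basis_vec 1) n) (basis_vec i)"
proof (cases "i = 1")
  case False
  then have "f (basis_vec i) = basis_vec i"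
    using assms f_basis_vec_eq[of i] d_eq_1 by (simp add: vscale_def)
  then show ?thesis using False by (simp add: fun_eq_iff shear_apply basis_vec_apply)
next
  case True
  show ?thesis unfolding True by (rule f_basis_vec_1_eq_shear)
qed

lemma f_eq_shear: "\<exists>x. \<forall>v\<in>vspace n. f v = shear n x v"
proof (intro exI ballI)
  define x where "x = f (basis_vec 1) n"
  fix v assume v: "v \<in> vspace n"
  show "f v = shear n x v"
  proof
    fix k
    have "v i * f (basis_vec i) k
        = (if i = k then v k else 0) + (if i = 1 then (if k = n then v 1 * x else 0) else 0)"
      if "i \<in> {1..n}" for i
      using f_basis_vec_eq_shear[OF that, folded x_def] n_ge_4
      by (simp add: shear_apply basis_vec_apply)
    then have "f v k = (\<Sum>i\<in>{1..n}. (if i = k then v k else 0))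
        + (\<Sum>i\<in>{1..n}. if i = 1 then (if k = n then v 1 * x else 0) else 0)"
      using f_expansion[OF v] by (simp add: sum.distrib)
    also have "\<dots> = shear n x v k"
      using n_ge_4 vspace_eq_0[OF v, of k] by (simp add: shear_apply)
    finally show "f v k = shear n x v k" .
  qed
qed

end

theorem mainTheorem13:
  fixes n :: nat and c :: "nat \<Rightarrow> nat \<Rightarrow> nat \<Rightarrow> complex"
  assumes "n \<ge> 4" and "in_S n c"
  shows "annihilator n c = {vscale t (basis_vec n) | t. True} \<and>
    (\<forall>f. is_automorphism n c f \<longleftrightarrow>
       (\<exists>x::complex. \<forall>v\<in>vspace n. f v = vadd v (vscale (v 1 * x) (basis_vec n))))"
proof (intro conjI allI iffI)
  show "annihilator n c = {vscale t (basis_vec n) | t. True}"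
    using annihilator_eq_top_line assms by simp
next
  fix f assume "is_automorphism n c f"
  then interpret S_automorphism n c f
    using assms by unfold_locales
  show "\<exists>x. \<forall>v\<in>vspace n. f v = vadd v (vscale (v 1 * x) (basis_vec n))"
    using f_eq_shear unfolding shear_def .
next
  fix f assume "\<exists>x. \<forall>v\<in>vspace n. f v = vadd v (vscale (v 1 * x) (basis_vec n))"
  then obtain x where "\<forall>v\<in>vspace n. f v = shear n x v" unfolding shear_def by blast
  then show "is_automorphism n c f"
    using assms by (intro shear_is_automorphism[OF in_S_strictly_upper]) auto
qed

end
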